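(* Let $\mathbf{b}\in H_{1,2,2}$ have odd norm $N(\mathbf{b})$. Then there is a unit $\mathbf{u}$ of $H_{1,2,2}$ with $\mathbf{b}-\mathbf{u}\in 2H_{1,2,2}$.
   Context: Let $\mathbf{i},\mathbf{j},\mathbf{k}$ be the standard quaternion units; $\overline{\mathbf{q}}$ is quaternion conjugation and $N(\mathbf{q})=\mathbf{q}\overline{\mathbf{q}}$. $H_{1,2,2}$ is the subring of the quaternions equal to the $\mathbb{Z}$-module generated by $\mathbf{v}_1=1$, $\mathbf{v}_2=\mathbf{i}$, $\mathbf{v}_3=\tfrac12(1+\mathbf{i}+\sqrt2\,\mathbf{j})$, $\mathbf{v}_4=\tfrac12(1+\mathbf{i}+\sqrt2\,\mathbf{k})$. A unit of $H_{1,2,2}$ is an element invertible in $H_{1,2,2}$ (equivalently, an element of norm $1$). *)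

theory Defs
  imports Complex_Main
begin

datatype quat = Quat (qre: real) (qi: real) (qj: real) (qk: real)

instantiation quat :: "{zero, one, plus, minus, uminus, times}"
begin
definition "0 = Quat 0 0 0 0"
definition "1 = Quat 1 0 0 0"
definition "p + q = Quat (qre p + qre q) (qi p + qi q) (qj p + qj q) (qk p + qk q)"
definition "p - q = Quat (qre p - qre q) (qi p - qi q) (qj p - qj q) (qk p - qk q)"
definition "- q = Quat (- qre q) (- qi q) (- qj q) (- qk q)"
definition "p * q = Quat
   (qre p * qre q - qi p * qi q - qj p * qj q - qk p * qk q)
   (qre p * qi q + qi p * qre q + qj p * qk q - qk p * qj q)
   (qre p * qj q - qi p * qk q + qj p * qre q + qk p * qi q)
   (qre p * qk q + qi p * qj q - qj p * qi q + qk p * qre q)"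
instance ..
end

definition qI :: quat where "qI = Quat 0 1 0 0"
definition qJ :: quat where "qJ = Quat 0 0 1 0"
definition qK :: quat where "qK = Quat 0 0 0 1"

definition qreal :: "real \<Rightarrow> quat" where "qreal r = Quat r 0 0 0"
definition qscale :: "real \<Rightarrow> quat \<Rightarrow> quat" where
  "qscale r q = Quat (r * qre q) (r * qi q) (r * qj q) (r * qk q)"
definition qcnj :: "quat \<Rightarrow> quat" where
  "qcnj q = Quat (qre q) (- qi q) (- qj q) (- qk q)"
definition qN :: "quat \<Rightarrow> quat" where "qN q = q * qcnj q"

definition v1 :: quat where "v1 = 1"
definition v2 :: quat where "v2 = qI"
definition v3 :: quat where "v3 = qscale (1/2) (1 + qI + qscale (sqrt 2) qJ)"
definition v4 :: quat where "v4 = qscale (1/2) (1 + qI + qscale (sqrt 2) qK)"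

definition H122 :: "quat set" where
  "H122 = {qscale (of_int a) v1 + qscale (of_int b) v2 + qscale (of_int c) v3 + qscale (of_int d) v4
           | a b c d :: int. True}"

definition H122_unit :: "quat \<Rightarrow> bool" where
  "H122_unit u \<longleftrightarrow> u \<in> H122 \<and> (\<exists>v \<in> H122. u * v = 1 \<and> v * u = 1)"

end

theory Submission
  imports Defs "HOL-Number_Theory.Cong"
begin

text \<open>In the coordinates of the basis v1, v2, v3, v4 the norm is the integral quadratic form
  Q(a,b,c,d) = a^2 + b^2 + (a + b)(c + d) + c^2 + cd + d^2, and conjugation maps H122 to itself,
  so every element of norm 1 is a unit. The parity of Q depends only on the coordinates mod 2,
  and a finite check shows that every residue class mod 2 on which Q is odd contains an element
  of norm 1, obtained by changing the signs of some coordinates of its representative in {0,1}^4.\<close>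

definition h122 :: "int \<Rightarrow> int \<Rightarrow> int \<Rightarrow> int \<Rightarrow> quat" where
  "h122 a b c d = qscale (of_int a) v1 + qscale (of_int b) v2 + qscale (of_int c) v3 + qscale (of_int d) v4"

definition h122_norm :: "int \<Rightarrow> int \<Rightarrow> int \<Rightarrow> int \<Rightarrow> int" where
  "h122_norm a b c d = a*a + b*b + (a + b)*(c + d) + c*c + c*d + d*d"

lemma h122_Quat: "h122 a b c d = Quat (a + (c + d)/2) (b + (c + d)/2) (c * sqrt 2/2) (d * sqrt 2/2)"
  unfolding h122_def v1_def v2_def v3_def v4_def qscale_def plus_quat_def one_quat_def qI_def qJ_def qK_def
  by (simp add: field_simps)

lemma H122_eq: "H122 = {h122 a b c d | a b c d. True}"
  unfolding H122_def h122_def by simp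

lemma h122_in_H122: "h122 a b c d \<in> H122"
  unfolding H122_eq by blast

lemma qcnj_h122: "qcnj (h122 a b c d) = h122 (a + c + d) (- b) (- c) (- d)"
  unfolding h122_Quat qcnj_def by (simp add: field_simps)

lemma h122_mult_qcnj: "h122 a b c d * qcnj (h122 a b c d) = qreal (h122_norm a b c d)"
  unfolding h122_Quat qcnj_def times_quat_def qreal_def h122_norm_def
  by (simp add: field_simps power2_eq_square)

lemma qcnj_mult_h122: "qcnj (h122 a b c d) * h122 a b c d = qreal (h122_norm a b c d)"
  unfolding h122_Quat qcnj_def times_quat_def qreal_def h122_norm_def
  by (simp add: field_simps power2_eq_square)

lemma H122_unit_h122:
  assumes "h122_norm a b c d = 1"
  shows "H122_unit (h122 a b c d)"
proof -
  have "h122 a b c d * qcnj (h122 a b c d) = 1" "qcnj (h122 a b c d) * h122 a b c d = 1"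
    using assms by (simp_all add: h122_mult_qcnj qcnj_mult_h122 qreal_def one_quat_def)
  moreover have "qcnj (h122 a b c d) \<in> H122"
    by (simp add: qcnj_h122 h122_in_H122)
  ultimately show ?thesis
    unfolding H122_unit_def using h122_in_H122 by blast
qed

lemma h122_diff: "h122 a b c d - h122 a' b' c' d' = h122 (a - a') (b - b') (c - c') (d - d')"
  unfolding h122_Quat minus_quat_def by (simp add: field_simps)

lemma h122_double: "h122 (2*p) (2*q) (2*r) (2*s) = qscale 2 (h122 p q r s)"
  unfolding h122_Quat qscale_def by (simp add: field_simps)

lemma h122_norm_cong_mod:
  "[h122_norm a b c d = h122_norm (a mod m) (b mod m) (c mod m) (d mod m)] (mod m)"
  unfolding h122_norm_def by (intro cong_add cong_mult) (simp_all add: cong_def)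

lemma h122_norm_one_by_sign_change:
  assumes "x \<in> {0,1}" "y \<in> {0,1}" "z \<in> {0,1}" "w \<in> {0,1}" and "odd (h122_norm x y z w)"
  shows "\<exists>e1\<in>{x,-x}. \<exists>e2\<in>{y,-y}. \<exists>e3\<in>{z,-z}. \<exists>e4\<in>{w,-w}. h122_norm e1 e2 e3 e4 = 1"
  using assms by (auto simp: h122_norm_def)

lemma odd_h122_norm_imp_norm_one_mod_2:
  assumes "odd (h122_norm a b c d)"
  obtains e1 e2 e3 e4 where "h122_norm e1 e2 e3 e4 = 1"
    and "even (a - e1)" "even (b - e2)" "even (c - e3)" "even (d - e4)"
proof -
  have mod2: "x mod 2 \<in> {0, 1}" for x :: int
    by auto
  have parity: "even (x - y)" if "y \<in> {x mod 2, - (x mod 2)}" for x y :: int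
    using that by auto
  have "odd (h122_norm (a mod 2) (b mod 2) (c mod 2) (d mod 2))"
    using assms cong_dvd_iff[OF h122_norm_cong_mod[of a b c d 2]] by blast
  then obtain e1 e2 e3 e4 where norm: "h122_norm e1 e2 e3 e4 = 1"
    and e: "e1 \<in> {a mod 2, - (a mod 2)}" "e2 \<in> {b mod 2, - (b mod 2)}"
      "e3 \<in> {c mod 2, - (c mod 2)}" "e4 \<in> {d mod 2, - (d mod 2)}"
    using h122_norm_one_by_sign_change[OF mod2 mod2 mod2 mod2] by blast
  show thesis
    by (rule that[OF norm parity[OF e(1)] parity[OF e(2)] parity[OF e(3)] parity[OF e(4)]])
qed

theorem lemma7:
  assumes "b \<in> H122"
    and "\<exists>n::int. odd n \<and> qN b = qreal (of_int n)"
  shows "\<exists>u. H122_unit u \<and> (\<exists>x \<in> H122. b - u = qscale 2 x)"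
proof -
  obtain a\<^sub>1 a\<^sub>2 a\<^sub>3 a\<^sub>4 where b: "b = h122 a\<^sub>1 a\<^sub>2 a\<^sub>3 a\<^sub>4"
    using assms(1) unfolding H122_eq by blast
  obtain n :: int where "odd n" "qN b = qreal n"
    using assms(2) by blast
  moreover have "qN b = qreal (h122_norm a\<^sub>1 a\<^sub>2 a\<^sub>3 a\<^sub>4)"
    unfolding qN_def b by (rule h122_mult_qcnj)
  ultimately have "odd (h122_norm a\<^sub>1 a\<^sub>2 a\<^sub>3 a\<^sub>4)"
    by (simp add: qreal_def)
  then obtain e\<^sub>1 e\<^sub>2 e\<^sub>3 e\<^sub>4 where unit: "h122_norm e\<^sub>1 e\<^sub>2 e\<^sub>3 e\<^sub>4 = 1"
    and "even (a\<^sub>1 - e\<^sub>1)" "even (a\<^sub>2 - e\<^sub>2)" "even (a\<^sub>3 - e\<^sub>3)" "even (a\<^sub>4 - e\<^sub>4)"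
    by (rule odd_h122_norm_imp_norm_one_mod_2)
  then obtain p q r s where "a\<^sub>1 - e\<^sub>1 = 2*p" "a\<^sub>2 - e\<^sub>2 = 2*q" "a\<^sub>3 - e\<^sub>3 = 2*r" "a\<^sub>4 - e\<^sub>4 = 2*s"
    by (elim evenE)
  then have "b - h122 e\<^sub>1 e\<^sub>2 e\<^sub>3 e\<^sub>4 = qscale 2 (h122 p q r s)"
    unfolding b h122_diff h122_double[symmetric] by simp
  then show ?thesis
    using H122_unit_h122[OF unit] h122_in_H122 by blast
qed

end
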